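(* Consider repetition-redundancy (Chase-combining) HARQ as described in the context, and let $k\ge 2$. Then the decoding-error events $\mathsf{ERR}_1,\ldots,\mathsf{ERR}_k$ are not independent in general: there exist SNR values $\gamma_1,\ldots,\gamma_k\ge 0$ for which $\Pr\{\mathsf{ERR}_{k-1},\mathsf{ERR}_k\}\neq\Pr\{\mathsf{ERR}_{k-1}\}\Pr\{\mathsf{ERR}_k\}$.
   Context: A message $\mathsf{m}\in\{0,1\}^{N_b}$ is encoded into a codeword $\mathbf{x}=\mathrm{ENC}[\mathsf{m}]\in\mathcal{X}^{N_s}$, $\mathcal{X}$ a complex constellation. In round $l$ the receiver observes $\mathbf{y}_l=\sqrt{\gamma_l}\,\mathbf{x}+\mathbf{z}_l$, where $\gamma_l\ge 0$ is the SNR of round $l$ and $\mathbf{z}_l$ are independent zero-mean unit-variance Gaussian noise vectors. With accumulated SNR $\gamma_{[k]}=\sum_{l=1}^k\gamma_l$ (assumed positive), the receiver forms the maximum-ratio-combined signal $\mathbf{y}_{[k]}=\frac{1}{\sqrt{\gamma_{[k]}}}\sum_{l=1}^k\sqrt{\gamma_l}\,\mathbf{y}_l=\sqrt{\gamma_{[k]}}\mathbf{x}+\mathbf{z}_{[k]}$ and decodes $\hat{\mathsf{m}}_k=\mathrm{DEC}[\mathbf{y}_{[k]}]$ with a fixed (deterministic) decoder $\mathrm{DEC}$. The decoding error after round $k$ is $\mathsf{ERR}_k=\{\hat{\mathsf{m}}_k\neq\mathsf{m}\}$, and $\Pr\{\mathsf{ERR}_k\}=\mathrm{PER}(\gamma_{[k]})$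 for a function $\mathrm{PER}$ (packet error rate). It is assumed that $0<\mathrm{PER}(\gamma)<1$ for some $\gamma>0$. *)

theory Defs
  imports "HOL-Probability.Probability"
begin

definition acc_snr :: "(nat \<Rightarrow> real) \<Rightarrow> nat \<Rightarrow> real" where
  "acc_snr g k = (\<Sum>l=1..k. g l)"

text \<open>Maximum-ratio-combined signal after round k (components i < Ns; zero padding beyond).
  Received signal of round l:  y_l = sqrt(g l) x + z_l.\<close>
definition mrc_signal ::
  "nat \<Rightarrow> (bool list \<Rightarrow> nat \<Rightarrow> complex) \<Rightarrow> (nat \<Rightarrow> 'w \<Rightarrow> nat \<Rightarrow> complex) \<Rightarrow> ('w \<Rightarrow> bool list)
    \<Rightarrow> (nat \<Rightarrow> real) \<Rightarrow> nat \<Rightarrow> 'w \<Rightarrow> nat \<Rightarrow> complex" where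
  "mrc_signal Ns ENC z msg g k \<omega> = (\<lambda>i. if i < Ns then
      complex_of_real (1 / sqrt (acc_snr g k)) *
        (\<Sum>l=1..k. complex_of_real (sqrt (g l)) *
           (complex_of_real (sqrt (g l)) * ENC (msg \<omega>) i + z l \<omega> i))
    else 0)"

definition err_event ::
  "'w measure \<Rightarrow> nat \<Rightarrow> (bool list \<Rightarrow> nat \<Rightarrow> complex) \<Rightarrow> ((nat \<Rightarrow> complex) \<Rightarrow> bool list)
    \<Rightarrow> (nat \<Rightarrow> 'w \<Rightarrow> nat \<Rightarrow> complex) \<Rightarrow> ('w \<Rightarrow> bool list) \<Rightarrow> (nat \<Rightarrow> real) \<Rightarrow> nat \<Rightarrow> 'w set" where
  "err_event M Ns ENC DEC z msg g k =
     {\<omega> \<in> space M. DEC (mrc_signal Ns ENC z msg g k \<omega>) \<noteq> msg \<omega>}"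

end

theory Submission
  imports Defs
begin

text \<open>A round with zero SNR adds nothing to the combined signal, so the receiver sees the same
  signal after rounds k - 1 and k and the two error events coincide. Spread a \<gamma> with
  0 < PER \<gamma> < 1 over the first k - 1 rounds and keep round k silent: both events then have
  probability p = PER \<gamma>, and an event is not independent of itself when p \<noteq> p * p.\<close>

lemma acc_snr_Suc: "acc_snr g (Suc n) = acc_snr g n + g (Suc n)"
  unfolding acc_snr_def by simp

lemma mrc_signal_silent_round:
  assumes "g (Suc n) = 0"
  shows "mrc_signal Ns ENC z msg g (Suc n) = mrc_signal Ns ENC z msg g n"
  unfolding mrc_signal_def acc_snr_Suc sum.cl_ivl_Suc assms by (simp add: fun_eq_iff)

lemma err_event_silent_round:
  assumes "g (Suc n) = 0"
  shows "err_event M Ns ENC DEC z msg g (Suc n) = err_event M Ns ENC DEC z msg g n"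
  unfolding err_event_def mrc_signal_silent_round[of g n, OF assms] ..

lemma acc_snr_uniform_spread:
  assumes "n \<ge> 1"
  shows "acc_snr (\<lambda>l. if 1 \<le> l \<and> l \<le> n then \<gamma> / real n else 0) n = \<gamma>"
proof -
  have "acc_snr (\<lambda>l. if 1 \<le> l \<and> l \<le> n then \<gamma> / real n else 0) n = (\<Sum>l=1..n. \<gamma> / real n)"
    unfolding acc_snr_def by (rule sum.cong) auto
  also have "\<dots> = \<gamma>"
    using assms by simp
  finally show ?thesis .
qed

theorem proposition1:
  fixes M :: "'w measure"
    and Nb Ns :: nat
    and X :: "complex set"
    and ENC :: "bool list \<Rightarrow> nat \<Rightarrow> complex"
    and DEC :: "(nat \<Rightarrow> complex) \<Rightarrow> bool list"
    and msg :: "'w \<Rightarrow> bool list"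
    and z :: "nat \<Rightarrow> 'w \<Rightarrow> nat \<Rightarrow> complex"
    and PER :: "real \<Rightarrow> real"
    and k :: nat
  assumes P: "prob_space M"
    and k2: "k \<ge> 2"
    and enc: "\<And>b i. length b = Nb \<Longrightarrow> i < Ns \<Longrightarrow> ENC b i \<in> X"
    and msg_len: "\<And>\<omega>. \<omega> \<in> space M \<Longrightarrow> length (msg \<omega>) = Nb"
    and msg_rv: "msg \<in> measurable M (count_space UNIV)"
    and noise_indep: "prob_space.indep_vars M (\<lambda>_. borel)
          (\<lambda>(l, i, b) \<omega>. if b then Re (z l \<omega> i) else Im (z l \<omega> i))
          (UNIV \<times> {..<Ns} \<times> UNIV)"
    and noise_gauss_re: "\<And>l i. i < Ns \<Longrightarrow>
          distributed M lborel (\<lambda>\<omega>. Re (z l \<omega> i)) (normal_density 0 (sqrt (1/2)))"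
    and noise_gauss_im: "\<And>l i. i < Ns \<Longrightarrow>
          distributed M lborel (\<lambda>\<omega>. Im (z l \<omega> i)) (normal_density 0 (sqrt (1/2)))"
    and msg_noise_indep: "\<And>A B. B \<in> sets (borel :: (nat \<Rightarrow> nat \<Rightarrow> complex) measure) \<Longrightarrow>
          measure M {\<omega> \<in> space M. msg \<omega> \<in> A \<and> (\<lambda>l i. if i < Ns then z l \<omega> i else 0) \<in> B}
          = measure M {\<omega> \<in> space M. msg \<omega> \<in> A} *
            measure M {\<omega> \<in> space M. (\<lambda>l i. if i < Ns then z l \<omega> i else 0) \<in> B}"
    and per: "\<And>g j. (\<forall>l. g l \<ge> 0) \<Longrightarrow> j \<ge> 1 \<Longrightarrow> acc_snr g j > 0 \<Longrightarrow>
          measure M (err_event M Ns ENC DEC z msg g j) = PER (acc_snr g j)"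
    and per_nontriv: "\<exists>\<gamma>>0. 0 < PER \<gamma> \<and> PER \<gamma> < 1"
  shows "\<exists>g :: nat \<Rightarrow> real. (\<forall>l. g l \<ge> 0) \<and> acc_snr g (k - 1) > 0 \<and>
           measure M (err_event M Ns ENC DEC z msg g (k - 1) \<inter> err_event M Ns ENC DEC z msg g k)
             \<noteq> measure M (err_event M Ns ENC DEC z msg g (k - 1)) *
               measure M (err_event M Ns ENC DEC z msg g k)"
proof -
  obtain \<gamma> where "\<gamma> > 0" and PER_\<gamma>: "0 < PER \<gamma>" "PER \<gamma> < 1"
    using per_nontriv by blast
  obtain n where n: "n \<ge> 1" "k = Suc n"
  proof
    show "k - 1 \<ge> 1" "k = Suc (k - 1)" using k2 by auto
  qed
  define g where "g = (\<lambda>l::nat. if 1 \<le> l \<and> l \<le> n then \<gamma> / real n else 0)"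
  have g_nonneg: "\<forall>l. g l \<ge> 0"
    using \<open>\<gamma> > 0\<close> by (simp add: g_def)
  have acc: "acc_snr g n = \<gamma>"
    unfolding g_def using acc_snr_uniform_spread[OF n(1)] .
  have same_event: "err_event M Ns ENC DEC z msg g (Suc n) = err_event M Ns ENC DEC z msg g n"
    by (rule err_event_silent_round[of g n]) (simp add: g_def)
  have "measure M (err_event M Ns ENC DEC z msg g n) = PER \<gamma>"
    using per[OF g_nonneg n(1)] acc \<open>\<gamma> > 0\<close> by simp
  moreover have "PER \<gamma> \<noteq> PER \<gamma> * PER \<gamma>"
    using PER_\<gamma> by simp
  ultimately show ?thesis
    using g_nonneg acc \<open>\<gamma> > 0\<close>
    by (intro exI[of _ g]) (simp add: n(2) same_event)
qed

end
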